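(* Let $k>0$, $p\in\mathbb C[z]\setminus\{0\}$ and $m\in\mathbb N$, and put $q_n=kz((1+z)^n-p)$. Then there are $n_0\in\mathbb N$, a sequence $\{W_n\}_{n\ge n_0}$ of connected non-empty open subsets of $\mathbb C$ containing $0$, and a sequence $\{r_n\}_{n\ge n_0}$ of polynomials of degree $m$ such that $r_n\to z^m$ (coefficientwise), $\lim_{n\to\infty}\sup_{z\in W_n}|z|=0$, and for each $n\ge n_0$: $r_n$ divides $q_n$, $q_n(W_n)\subseteq\mathbb D$, and all zeros of $r_n$ lie in $W_n$.
   Context: $\mathbb D=\{z\in\mathbb C:|z|<1\}$. *)

theory Defs
  imports "HOL-Analysis.Analysis" "HOL-Computational_Algebra.Polynomial"
begin

definition qpoly :: "real \<Rightarrow> complex poly \<Rightarrow> nat \<Rightarrow> complex poly" where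
  "qpoly k p n = smult (complex_of_real k) ([:0, 1:] * ([:1, 1:] ^ n - p))"

end

theory Submission
  imports
    Defs
    "HOL-Computational_Algebra.Fundamental_Theorem_Algebra"
    "HOL-Complex_Analysis.Complex_Analysis"
    "HOL-Real_Asymp.Real_Asymp"
begin

(*
  Write p = z^j g with g(0) \<noteq> 0, put \<beta> = (-1)^j j^j g(0) and t_n = j (log n - log log n).
  In the variable w = n z + t_n the polynomials e^{t_n} ((1 + z)^n - p(z)) converge to e^w - \<beta>,
  uniformly on compact sets: (1 + (w - t_n)/n)^n \<approx> e^{w - t_n} because t_n^2/n \<rightarrow> 0, and
  e^{t_n} z^j g(z) \<rightarrow> \<beta> because e^{t_n} (t_n/n)^j \<rightarrow> j^j. Around L = Ln \<beta> the function e^w - \<beta>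
  has 2m + 1 simple zeros inside the circle of radius (2m + 1)\<pi> and none on it, so by Rouche's
  theorem (1 + z)^n - p has 2m + 1 zeros in the disc of radius (2m + 1)\<pi>/n about
  c_n = (L - t_n)/n; m of them are the roots of r_n. W_n is the disc about c_n of radius
  |c_n| + 2(2m + 1)\<pi>/n: it contains 0 and these zeros, its points have modulus O(t_n/n) and
  real part O(1/n), so |1 + z|^n stays bounded on W_n and q_n = k z ((1 + z)^n - p) tends to 0
  uniformly there.
*)

section \<open>Products of linear factors\<close>

lemma prod_mset_linear_nonzero:
  fixes N :: "'a::idom multiset"
  shows "(\<Prod>a\<in>#N. [:-a, 1:]) \<noteq> 0"
proof -
  have "0 \<notin> (\<lambda>a. [:-a, 1:]) ` set_mset N"
  proof
    assume "0 \<in> (\<lambda>a. [:-a, 1:]) ` set_mset N"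
    then obtain a where "[:-a, 1:] = (0 :: 'a poly)"
      by auto
    then show False
      by simp
  qed
  then show ?thesis
    by simp
qed

lemma degree_prod_mset_linear:
  fixes N :: "'a::idom multiset"
  shows "degree (\<Prod>a\<in>#N. [:-a, 1:]) = size N"
proof (induction N)
  case (add x N)
  have "degree ([:-x, 1:] * (\<Prod>a\<in>#N. [:-a, 1:])) = degree [:-x, 1:] + degree (\<Prod>a\<in>#N. [:-a, 1:])"
    by (rule degree_mult_eq[OF _ prod_mset_linear_nonzero]) simp
  with add show ?case by simp
qed simp

lemma poly_prod_mset_linear_eq_0_iff:
  fixes N :: "'a::idom multiset"
  shows "poly (\<Prod>a\<in>#N. [:-a, 1:]) z = 0 \<longleftrightarrow> z \<in># N"
  by (auto simp: poly_prod_mset image_iff)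

lemma ex_prod_mset_linear_dvd:
  fixes f :: "complex poly"
  assumes "m \<le> size (filter_mset P (proots f))"
  obtains N where "size N = m" "\<forall>a\<in>#N. P a" "(\<Prod>a\<in>#N. [:-a, 1:]) dvd f"
proof -
  obtain xs where xs: "mset xs = filter_mset P (proots f)"
    using ex_mset by blast
  define N where "N = mset (take m xs)"
  have "size N = m"
    using assms xs by (metis N_def length_take min.absorb2 size_mset)
  moreover have sub: "N \<subseteq># filter_mset P (proots f)"
    by (metis N_def xs append_take_drop_id mset_append mset_subset_eq_add_left)
  moreover have "(\<Prod>a\<in>#N. [:-a, 1:]) dvd f"
  proof -
    have "(\<Prod>a\<in>#N. [:-a, 1:]) dvd (\<Prod>a\<in>#proots f. [:-a, 1:])"
      using sub multiset_filter_subset subset_mset.order_trans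
      by (intro prod_mset_subset_imp_dvd image_mset_subseteq_mono) blast
    also have "\<dots> dvd f"
      by (subst (2) complex_poly_decompose_multiset[symmetric]) (rule dvd_smult, simp)
    finally show ?thesis .
  qed
  moreover have "\<forall>a\<in>#N. P a"
    using sub by (auto dest: mset_subset_eqD)
  ultimately show thesis
    using that by blast
qed

lemma norm_coeff_prod_mset_linear_le:
  fixes N :: "complex multiset"
  assumes "\<forall>a\<in>#N. norm a \<le> 1"
  shows "norm (coeff (\<Prod>a\<in>#N. [:-a, 1:]) i) \<le> 2 ^ size N"
  using assms
proof (induction N arbitrary: i)
  case empty
  then show ?case by simp
next
  case (add x N)
  define r where "r = (\<Prod>a\<in>#N. [:-a, 1:])"
  have r: "norm (coeff r i) \<le> 2 ^ size N" for i
    using add by (simp add: r_def)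
  have "norm (coeff (pCons 0 r - smult x r) i) \<le> 2 ^ size N + 2 ^ size N"
  proof (cases i)
    case 0
    have "norm x * norm (coeff r 0) \<le> 1 * 2 ^ size N"
      using r[of 0] add.prems by (intro mult_mono) auto
    moreover have "norm (coeff (pCons 0 r - smult x r) i) = norm x * norm (coeff r 0)"
      using 0 by (simp add: norm_mult)
    ultimately show ?thesis
      using zero_le_power[of "2::real" "size N"] by linarith
  next
    case (Suc i')
    have "norm (coeff r i' - x * coeff r i) \<le> norm (coeff r i') + norm x * norm (coeff r i)"
      using norm_triangle_ineq4 by (metis norm_mult)
    also have "\<dots> \<le> 2 ^ size N + 1 * 2 ^ size N"
      using r[of i'] r[of i] add.prems by (intro add_mono mult_mono) auto
    finally show ?thesis using Suc by simp
  qed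
  moreover have "(\<Prod>a\<in>#add_mset x N. [:-a, 1:]) = pCons 0 r - smult x r"
    by (simp add: r_def algebra_simps)
  ultimately show ?case by simp
qed

lemma norm_coeff_prod_mset_linear_sub_monom_le:
  fixes N :: "complex multiset"
  assumes "\<forall>a\<in>#N. norm a \<le> e" and "e \<le> 1"
  shows "norm (coeff (\<Prod>a\<in>#N. [:-a, 1:]) i - coeff (monom 1 (size N)) i) \<le> (2 ^ size N - 1) * e"
  using assms(1)
proof (induction N arbitrary: i)
  case empty
  then show ?case by simp
next
  case (add x N)
  define r where "r = (\<Prod>a\<in>#N. [:-a, 1:])"
  have e: "0 \<le> e" "norm x \<le> e"
    using add.prems by (auto intro: order_trans[OF norm_ge_zero])
  have IH: "norm (coeff r i - coeff (monom 1 (size N)) i) \<le> (2 ^ size N - 1) * e" for i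
    using add by (simp add: r_def)
  have "norm (x * coeff r i) \<le> e * 2 ^ size N"
    using norm_coeff_prod_mset_linear_le[of N i] add.prems e assms(2)
    by (auto simp: r_def norm_mult intro!: mult_mono intro: order_trans)
  moreover have "norm (coeff (pCons 0 r - smult x r) i - coeff (monom 1 (Suc (size N))) i)
      \<le> (2 ^ size N - 1) * e + norm (x * coeff r i)"
  proof (cases i)
    case 0
    then show ?thesis using e by simp
  next
    case (Suc i')
    then have "coeff (pCons 0 r - smult x r) i - coeff (monom 1 (Suc (size N))) i
        = (coeff r i' - coeff (monom 1 (size N)) i') - x * coeff r i"
      by simp
    then have "norm (coeff (pCons 0 r - smult x r) i - coeff (monom 1 (Suc (size N))) i)
        \<le> norm (coeff r i' - coeff (monom 1 (size N)) i') + norm (x * coeff r i)"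
      by (simp only: norm_triangle_ineq4)
    then show ?thesis
      using IH[of i'] by linarith
  qed
  moreover have "(\<Prod>a\<in>#add_mset x N. [:-a, 1:]) = pCons 0 r - smult x r"
    by (simp add: r_def algebra_simps)
  ultimately have "norm (coeff (\<Prod>a\<in>#add_mset x N. [:-a, 1:]) i
      - coeff (monom 1 (size (add_mset x N))) i) \<le> (2 ^ size N - 1) * e + e * 2 ^ size N"
    by simp
  also have "\<dots> = (2 ^ size (add_mset x N) - 1) * e"
    by (simp add: algebra_simps)
  finally show ?case .
qed

section \<open>Counting zeros with Rouche's theorem\<close>

lemma zorder_poly:
  fixes p :: "complex poly"
  assumes "p \<noteq> 0"
  shows "zorder (poly p) a = int (order a p)"
proof -
  obtain q where q: "p = [:-a, 1:] ^ order a p * q" "\<not> [:-a, 1:] dvd q"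
    using order_decomp[OF assms] by blast
  show ?thesis
  proof (rule zorder_eqI[of UNIV a "poly q"])
    show "poly q holomorphic_on UNIV"
      by (intro holomorphic_intros)
    show "poly q a \<noteq> 0"
      using q(2) by (simp add: poly_eq_0_iff_dvd)
    show "poly p w = poly q w * (w - a) powi int (order a p)" for w
      by (subst q(1)) (simp add: mult.commute)
  qed auto
qed

lemma winding_number_circlepath_eq_indicator:
  assumes "r > 0" and "z \<notin> sphere c r"
  shows "winding_number (circlepath c r) z = (if z \<in> ball c r then 1 else 0)"
proof (cases "z \<in> ball c r")
  case True
  then show ?thesis
    by (simp add: winding_number_circlepath dist_norm norm_minus_commute)
next
  case False
  with assms have "z \<notin> cball c r"
    by auto
  with False assms show ?thesis
    by (auto intro!: winding_number_zero_outside[of _ "cball c r"]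
        simp: path_image_circlepath_nonneg)
qed

lemma Rouche_circlepath_sum_zorder:
  fixes f g :: "complex \<Rightarrow> complex"
  assumes f: "f holomorphic_on UNIV" and g: "g holomorphic_on UNIV" and "r > 0"
    and fin_f: "finite {z \<in> ball c (2 * r). f z = 0}" and fin_g: "finite {z \<in> ball c (2 * r). g z = 0}"
    and close: "\<And>z. z \<in> sphere c r \<Longrightarrow> norm (g z - f z) < norm (f z)"
  shows "(\<Sum>z\<in>{z \<in> ball c r. g z = 0}. zorder g z) = (\<Sum>z\<in>{z \<in> ball c r. f z = 0}. zorder f z)"
proof -
  define s where "s = ball c (2 * r)"
  define \<gamma> where "\<gamma> = circlepath c r"
  have sub: "ball c r \<subseteq> s" and img: "path_image \<gamma> = sphere c r"
    using \<open>r > 0\<close> by (auto simp: s_def \<gamma>_def path_image_circlepath_nonneg)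
  have sum_eq: "(\<Sum>z\<in>{z \<in> s. h z = 0}. winding_number \<gamma> z * zorder h z)
      = of_int (\<Sum>z\<in>{z \<in> ball c r. h z = 0}. zorder h z)"
    if "finite {z \<in> s. h z = 0}" and "\<And>z. h z = 0 \<Longrightarrow> z \<notin> sphere c r" for h
  proof -
    have "(\<Sum>z\<in>{z \<in> s. h z = 0}. winding_number \<gamma> z * zorder h z)
        = (\<Sum>z\<in>{z \<in> s. h z = 0} \<inter> ball c r. of_int (zorder h z))"
      using that \<open>r > 0\<close>
      by (subst sum.inter_restrict) (auto simp: \<gamma>_def winding_number_circlepath_eq_indicator intro!: sum.cong)
    also have "{z \<in> s. h z = 0} \<inter> ball c r = {z \<in> ball c r. h z = 0}"
      using sub by auto
    finally show ?thesis
      by simp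
  qed
  have "winding_number \<gamma> z = 0" if "z \<notin> s" for z
    using that \<open>r > 0\<close> unfolding \<gamma>_def
    by (intro winding_number_zero_outside[of _ "cball c r"]) (auto simp: s_def path_image_circlepath_nonneg)
  then have "(\<Sum>z\<in>{z \<in> s. f z + (g z - f z) = 0}. winding_number \<gamma> z * zorder (\<lambda>z. f z + (g z - f z)) z)
      = (\<Sum>z\<in>{z \<in> s. f z = 0}. winding_number \<gamma> z * zorder f z)"
    using fin_f fin_g close sub img holomorphic_on_subset[OF f] holomorphic_on_subset[OF g] \<open>r > 0\<close>
    by (intro Rouche_theorem) (auto simp: s_def \<gamma>_def intro!: holomorphic_intros)
  then have Rouche: "(\<Sum>z\<in>{z \<in> s. g z = 0}. winding_number \<gamma> z * zorder g z)
      = (\<Sum>z\<in>{z \<in> s. f z = 0}. winding_number \<gamma> z * zorder f z)"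
    by simp
  have "(\<Sum>z\<in>{z \<in> s. g z = 0}. winding_number \<gamma> z * zorder g z)
      = of_int (\<Sum>z\<in>{z \<in> ball c r. g z = 0}. zorder g z)"
  proof (rule sum_eq)
    show "g z = 0 \<Longrightarrow> z \<notin> sphere c r" for z
      using close[of z] by auto
  qed (use fin_g in \<open>simp add: s_def\<close>)
  moreover have "(\<Sum>z\<in>{z \<in> s. f z = 0}. winding_number \<gamma> z * zorder f z)
      = of_int (\<Sum>z\<in>{z \<in> ball c r. f z = 0}. zorder f z)"
  proof (rule sum_eq)
    show "f z = 0 \<Longrightarrow> z \<notin> sphere c r" for z
      using close[of z] by auto
  qed (use fin_f in \<open>simp add: s_def\<close>)
  ultimately show ?thesis
    using Rouche by (metis of_int_eq_iff)
qed

lemma size_proots_in_ball_eq_card_zeros: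
  fixes Q :: "complex poly" and f :: "complex \<Rightarrow> complex"
  assumes "Q \<noteq> 0" and f: "f holomorphic_on UNIV" and "r > 0"
    and "finite {z \<in> ball c (2 * r). f z = 0}"
    and simple: "\<And>z. f z = 0 \<Longrightarrow> deriv f z \<noteq> 0"
    and "\<And>z. z \<in> sphere c r \<Longrightarrow> norm (poly Q z - f z) < norm (f z)"
  shows "size (filter_mset (\<lambda>z. z \<in> ball c r) (proots Q)) = card {z \<in> ball c r. f z = 0}"
proof -
  have "finite {z \<in> ball c (2 * r). poly Q z = 0}"
    using poly_roots_finite[OF \<open>Q \<noteq> 0\<close>] by (rule finite_subset[rotated]) auto
  with assms have "(\<Sum>z\<in>{z \<in> ball c r. poly Q z = 0}. zorder (poly Q) z)
      = (\<Sum>z\<in>{z \<in> ball c r. f z = 0}. zorder f z)"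
    by (intro Rouche_circlepath_sum_zorder) (auto intro: holomorphic_intros)
  also have "\<dots> = (\<Sum>z\<in>{z \<in> ball c r. f z = 0}. 1)"
    using f simple by (intro sum.cong refl zorder_zero_eqI[of f UNIV]) auto
  also have "\<dots> = card {z \<in> ball c r. f z = 0}"
    by simp
  also have "{z \<in> ball c r. poly Q z = 0} = {z \<in> set_mset (proots Q). z \<in> ball c r}"
    using \<open>Q \<noteq> 0\<close> by auto
  finally show ?thesis
    using \<open>Q \<noteq> 0\<close> by (simp add: zorder_poly size_multiset_overloaded_eq flip: of_nat_sum)
qed

lemma exp_affine_eq_exp_in_ball:
  fixes a b L :: complex
  assumes "a \<noteq> 0"
  shows "{z \<in> ball ((L - b) / a) r. exp (a * z + b) = exp L}
    = (\<lambda>k::int. (L - b + of_int (2 * k) * pi * \<i>) / a) ` {k. 2 * \<bar>k\<bar> * pi < norm a * r}"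
proof -
  define zk where "zk k = (L - b + of_int (2 * k) * pi * \<i>) / a" for k :: int
  have zeros: "exp (a * z + b) = exp L \<longleftrightarrow> (\<exists>k. z = zk k)" for z
    using assms by (simp add: exp_eq zk_def field_simps)
  have "dist ((L - b) / a) (zk k) = 2 * \<bar>k\<bar> * pi / norm a" for k
  proof -
    have "zk k - (L - b) / a = of_int (2 * k) * pi * \<i> / a"
      using assms by (simp add: zk_def field_simps)
    then show ?thesis
      by (simp add: dist_norm norm_minus_commute norm_divide norm_mult)
  qed
  then have "dist ((L - b) / a) (zk k) < r \<longleftrightarrow> 2 * \<bar>k\<bar> * pi < norm a * r" for k
    using assms by (simp add: divide_less_eq mult.commute)
  then show ?thesis
    unfolding zk_def[symmetric] using zeros by auto
qed

lemma finite_exp_affine_eq_exp_in_ball: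
  fixes a b L :: complex
  assumes "a \<noteq> 0"
  shows "finite {z \<in> ball ((L - b) / a) r. exp (a * z + b) = exp L}"
proof -
  have "{k::int. 2 * \<bar>k\<bar> * pi < norm a * r} \<subseteq> {-\<lceil>norm a * r\<rceil>..\<lceil>norm a * r\<rceil>}"
  proof
    fix k :: int
    assume "k \<in> {k::int. 2 * \<bar>k\<bar> * pi < norm a * r}"
    moreover have "real_of_int \<bar>k\<bar> * 1 \<le> real_of_int \<bar>k\<bar> * (2 * pi)"
      using pi_gt3 by (intro mult_left_mono) auto
    ultimately have "\<bar>k\<bar> \<le> norm a * r"
      by (simp add: mult.commute mult.left_commute)
    then have "\<bar>k\<bar> \<le> \<lceil>norm a * r\<rceil>"
      by (meson le_of_int_ceiling of_int_le_iff order_trans)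
    then show "k \<in> {-\<lceil>norm a * r\<rceil>..\<lceil>norm a * r\<rceil>}"
      by (auto simp: abs_le_iff)
  qed
  then show ?thesis
    unfolding exp_affine_eq_exp_in_ball[OF assms] by (meson finite_atLeastAtMost_int finite_imageI finite_subset)
qed

lemma card_exp_affine_eq_exp_in_ball:
  fixes a b L :: complex and K :: nat
  assumes "a \<noteq> 0"
  shows "card {z \<in> ball ((L - b) / a) ((2 * K + 1) * pi / norm a). exp (a * z + b) = exp L} = 2 * K + 1"
proof -
  have "{k::int. 2 * \<bar>k\<bar> * pi < norm a * ((2 * K + 1) * pi / norm a)} = {-int K..int K}"
    using assms by auto
  then show ?thesis
    unfolding exp_affine_eq_exp_in_ball[OF assms]
    using assms by (subst card_image) (auto simp: inj_on_def nat_add_distrib)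
qed

lemma exp_sub_exp_bounded_below_on_sphere:
  fixes L :: complex and K :: nat
  obtains \<delta> where "\<delta> > 0" and "\<And>w. w \<in> sphere L ((2 * K + 1) * pi) \<Longrightarrow> \<delta> \<le> norm (exp w - exp L)"
proof -
  define R where "R = (2 * K + 1) * pi"
  have "R > 0"
    by (simp add: R_def)
  then have "\<exists>w0\<in>sphere L R. \<forall>w\<in>sphere L R. norm (exp w0 - exp L) \<le> norm (exp w - exp L)"
    by (intro continuous_attains_inf continuous_intros) auto
  then obtain w0 where w0: "w0 \<in> sphere L R"
      and min: "\<And>w. w \<in> sphere L R \<Longrightarrow> norm (exp w0 - exp L) \<le> norm (exp w - exp L)"
    by blast
  have "exp w0 \<noteq> exp L"
    \<comment> \<open>the solutions of exp w = exp L lie at even multiples of \<pi> from L\<close>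
  proof
    assume "exp w0 = exp L"
    then obtain k :: int where "w0 = L + of_int (2 * k) * pi * \<i>"
      by (auto simp: exp_eq)
    then have "R = 2 * \<bar>k\<bar> * pi"
      using w0 by (simp add: dist_norm norm_mult)
    then have "int (2 * K + 1) = 2 * \<bar>k\<bar>"
      unfolding R_def by (metis mult_cancel_right pi_neq_zero of_int_eq_iff of_int_of_nat_eq)
    then show False
      by presburger
  qed
  with that[of "norm (exp w0 - exp L)"] min show thesis
    by (simp add: R_def)
qed

lemma size_proots_near_exp_zeros:
  fixes Q :: "complex poly" and L :: complex and t :: real and n K :: nat
  assumes "n > 0" and "Q \<noteq> 0"
    and close: "\<And>w::complex. w \<in> sphere L ((2 * K + 1) * pi) \<Longrightarrow>
      norm (exp t * poly Q ((w - t) / n) - (exp w - exp L)) < norm (exp w - exp L)"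
  shows "size (filter_mset (\<lambda>z. z \<in> ball ((L - t) / n) ((2 * K + 1) * pi / n)) (proots Q))
    = 2 * K + 1"
proof -
  define a :: complex where "a = of_nat n"
  define f where "f z = exp (a * z + t) - exp L" for z
  have "a \<noteq> 0" and norm_a: "norm a = n"
    using \<open>n > 0\<close> by (simp_all add: a_def)
  have "size (filter_mset (\<lambda>z. z \<in> ball ((L - t) / a) ((2 * K + 1) * pi / n))
      (proots (smult (exp t) Q))) = card {z \<in> ball ((L - t) / a) ((2 * K + 1) * pi / n). f z = 0}"
  proof (rule size_proots_in_ball_eq_card_zeros)
    show "f holomorphic_on UNIV"
      unfolding f_def by (intro holomorphic_intros)
    show "finite {z \<in> ball ((L - t) / a) (2 * ((2 * K + 1) * pi / n)). f z = 0}"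
      using finite_exp_affine_eq_exp_in_ball[OF \<open>a \<noteq> 0\<close>] by (simp add: f_def)
    show "deriv f z \<noteq> 0" if "f z = 0" for z
    proof -
      have "(f has_field_derivative a * exp (a * z + t)) (at z)"
        unfolding f_def by (auto intro!: derivative_eq_intros)
      then show ?thesis
        using \<open>a \<noteq> 0\<close> by (simp add: DERIV_imp_deriv)
    qed
    show "norm (poly (smult (exp t) Q) z - f z) < norm (f z)"
      if "z \<in> sphere ((L - t) / a) ((2 * K + 1) * pi / n)" for z
    proof -
      have "(L - t) / a - z = (L - (a * z + t)) / a"
        using \<open>a \<noteq> 0\<close> by (simp add: field_simps)
      then have "dist ((L - t) / a) z = dist L (a * z + t) / n"
        by (simp add: dist_norm norm_divide norm_a)
      then have "a * z + t \<in> sphere L ((2 * K + 1) * pi)"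
        using that \<open>n > 0\<close> by simp
      from close[OF this] show ?thesis
        using \<open>a \<noteq> 0\<close> by (simp add: f_def a_def)
    qed
  qed (use \<open>Q \<noteq> 0\<close> \<open>n > 0\<close> in simp_all)
  also have "\<dots> = 2 * K + 1"
    using card_exp_affine_eq_exp_in_ball[OF \<open>a \<noteq> 0\<close>, of L t K] by (simp add: f_def norm_a)
  finally show ?thesis
    using \<open>n > 0\<close> by (simp add: a_def)
qed

section \<open>Uniform approximation of the rescaled polynomials\<close>

lemma norm_one_plus_pow_sub_exp_le:
  fixes x :: complex
  assumes "norm x \<le> 1 / 2" and "n * norm x ^ 2 \<le> 1 / 4"
  shows "norm ((1 + x) ^ n - exp (n * x)) \<le> 3 * real n * norm x ^ 2 * norm (exp (n * x))"
proof -
  define d where "d = of_nat n * (Ln (1 + x) - x)"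
  have "norm (Ln (1 + x) - x) \<le> norm x ^ 2 / (1 - norm x)"
    using Ln_approx_linear[of x] assms(1) by simp
  also have "\<dots> \<le> norm x ^ 2 / (1 / 2)"
    using assms(1) by (intro divide_left_mono) auto
  finally have "n * norm (Ln (1 + x) - x) \<le> n * (2 * norm x ^ 2)"
    by (intro mult_left_mono) auto
  then have d: "norm d \<le> 2 * n * norm x ^ 2"
    by (simp add: d_def norm_mult)
  have "1 + x \<noteq> 0"
  proof
    assume "1 + x = 0"
    then have "x = -1"
      by (simp add: add_eq_0_iff)
    with assms(1) show False
      by simp
  qed
  then have "(1 + x) ^ n = exp (n * Ln (1 + x))"
    by (simp add: exp_of_nat_mult)
  also have "n * Ln (1 + x) = n * x + d"
    by (simp add: d_def algebra_simps)
  finally have "(1 + x) ^ n = exp (n * x) * exp d"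
    by (simp add: exp_add)
  then have "(1 + x) ^ n - exp (n * x) = exp (n * x) * (exp d - 1)"
    by (simp add: algebra_simps)
  then have "norm ((1 + x) ^ n - exp (n * x)) = norm (exp (n * x)) * norm (exp d - 1)"
    by (simp add: norm_mult)
  also have "\<dots> \<le> norm (exp (n * x)) * (3 / 2 * norm d)"
    using d assms(2) by (intro mult_left_mono norm_exp_bounds) auto
  also have "\<dots> \<le> norm (exp (n * x)) * (3 / 2 * (2 * n * norm x ^ 2))"
    using d by (intro mult_left_mono) auto
  finally show ?thesis
    by (simp add: algebra_simps)
qed

lemma norm_shifted_pow_sub_exp_le:
  fixes w :: complex and t :: real and n :: nat
  assumes "n > 0" and small: "n * norm ((w - t) / n) ^ 2 \<le> 1 / 4"
  shows "norm (exp t * (1 + (w - t) / n) ^ n - exp w) \<le> 3 * (n * norm ((w - t) / n) ^ 2) * norm (exp w)"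
proof -
  define x where "x = (w - t) / n"
  have "norm x ^ 2 \<le> n * norm x ^ 2"
    using \<open>n > 0\<close> by (simp add: mult_le_cancel_right1)
  with small have "norm x ^ 2 \<le> (1 / 2) ^ 2"
    by (simp add: x_def power2_eq_square)
  then have "norm x \<le> 1 / 2"
    by (rule power2_le_imp_le) simp
  have exp_w: "exp t * exp (n * x) = exp w"
    using \<open>n > 0\<close> by (simp add: x_def exp_add[symmetric] exp_of_real[symmetric])
  have "norm (exp t * (1 + x) ^ n - exp w) = exp t * norm ((1 + x) ^ n - exp (n * x))"
    by (simp add: exp_w[symmetric] norm_mult right_diff_distrib[symmetric])
  also have "\<dots> \<le> exp t * (3 * real n * norm x ^ 2 * norm (exp (n * x)))"
    using \<open>norm x \<le> 1 / 2\<close> small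
    by (intro mult_left_mono norm_one_plus_pow_sub_exp_le) (simp_all add: x_def)
  also have "\<dots> = 3 * (n * norm x ^ 2) * norm (exp w)"
    by (simp add: exp_w[symmetric] norm_mult)
  finally show ?thesis
    by (simp add: x_def)
qed

lemma eventually_shifted_pow_near_exp:
  fixes t :: "nat \<Rightarrow> real" and R \<delta> :: real
  assumes "\<delta> > 0" and sq: "(\<lambda>n. (R + t n) ^ 2 / n) \<longlonglongrightarrow> 0"
    and nonneg: "eventually (\<lambda>n. 0 \<le> t n) sequentially"
  shows "eventually (\<lambda>n. \<forall>w\<in>cball (0::complex) R.
    norm (exp (t n) * (1 + (w - t n) / n) ^ n - exp w) < \<delta>) sequentially"
proof -
  define \<eta> where "\<eta> = min (1 / 4) (\<delta> / (3 * exp R))"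
  have "\<eta> > 0" and "\<eta> \<le> 1 / 4" and \<eta>_le: "3 * \<eta> * exp R \<le> \<delta>"
    using \<open>\<delta> > 0\<close> by (auto simp: \<eta>_def field_simps min_def)
  from sq \<open>\<eta> > 0\<close> have "eventually (\<lambda>n. (R + t n) ^ 2 / n < \<eta>) sequentially"
    by (rule order_tendstoD)
  with nonneg eventually_gt_at_top[of 0] show ?thesis
  proof eventually_elim
    case (elim n)
    show ?case
    proof
      fix w :: complex
      assume w: "w \<in> cball 0 R"
      have "norm (w - t n) \<le> R + t n"
        using w elim norm_triangle_ineq4[of w "t n"] by auto
      then have "norm ((w - t n) / n) \<le> (R + t n) / n"
        using elim by (simp add: norm_divide divide_right_mono)
      then have "n * norm ((w - t n) / n) ^ 2 \<le> n * ((R + t n) / n) ^ 2"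
        by (intro mult_left_mono power_mono) auto
      also have "\<dots> = (R + t n) ^ 2 / n"
        by (simp add: power2_eq_square)
      finally have small: "n * norm ((w - t n) / n) ^ 2 < \<eta>"
        using elim by linarith
      have "norm (exp w) \<le> exp R"
        using w by simp (meson complex_Re_le_cmod order_trans)
      have "norm (exp (t n) * (1 + (w - t n) / n) ^ n - exp w)
          \<le> 3 * (n * norm ((w - t n) / n) ^ 2) * norm (exp w)"
        using small \<open>\<eta> \<le> 1 / 4\<close> elim by (intro norm_shifted_pow_sub_exp_le) auto
      also have "\<dots> < 3 * \<eta> * norm (exp w)"
        using small by simp
      also have "\<dots> \<le> 3 * \<eta> * exp R"
        using \<open>norm (exp w) \<le> exp R\<close> \<open>\<eta> > 0\<close> by (intro mult_left_mono) auto
      also have "\<dots> \<le> \<delta>"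
        by (rule \<eta>_le)
      finally show "norm (exp (t n) * (1 + (w - t n) / n) ^ n - exp w) < \<delta>" .
    qed
  qed
qed

lemma dist_Pair_Pair_le: "dist (a, b) (c, d) \<le> dist a c + dist b d"
  unfolding dist_Pair_Pair by (rule sqrt_sum_squares_le_sum) simp_all

lemma isCont_eventually_dist_less:
  fixes h :: "'a::metric_space \<Rightarrow> 'b::metric_space" and \<epsilon> :: "nat \<Rightarrow> real"
  assumes "isCont h y0" and "e > 0" and "\<epsilon> \<longlonglongrightarrow> 0"
  shows "eventually (\<lambda>n. \<forall>y. dist y y0 \<le> \<epsilon> n \<longrightarrow> dist (h y) (h y0) < e) sequentially"
proof -
  obtain \<eta> where "\<eta> > 0" and \<eta>: "\<And>y. dist y y0 < \<eta> \<Longrightarrow> dist (h y) (h y0) < e"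
    using assms(1,2) unfolding continuous_at_eps_delta by metis
  from assms(3) \<open>\<eta> > 0\<close> have "eventually (\<lambda>n. \<epsilon> n < \<eta>) sequentially"
    by (rule order_tendstoD)
  then show ?thesis
    by eventually_elim (use \<eta> in auto)
qed

lemma exp_mult_shifted_power:
  fixes w :: complex and t :: real and n j :: nat
  assumes "n > 0" and "j > 0 \<Longrightarrow> t \<noteq> 0"
  shows "exp t * ((w - t) / n) ^ j = exp t * (t / n) ^ j * (w / t - 1) ^ j"
proof (cases "j = 0")
  case False
  with assms have "(w - t) / n = of_real (t / n) * (w / t - 1)"
    by (simp add: field_simps)
  then show ?thesis
    unfolding of_real_mult of_real_power by (simp only: power_mult_distrib mult.assoc)
qed simp

lemma eventually_nonzero_of_tendsto_exp_scale:
  fixes t :: "nat \<Rightarrow> real"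
  assumes "(\<lambda>n. exp (t n) * (t n / n) ^ j) \<longlonglongrightarrow> real j ^ j" and "j > 0"
  shows "eventually (\<lambda>n. t n \<noteq> 0) sequentially"
proof -
  have "eventually (\<lambda>n. exp (t n) * (t n / n) ^ j > 0) sequentially"
    using assms by (intro order_tendstoD) auto
  then show ?thesis
    by eventually_elim (use \<open>j > 0\<close> in \<open>auto simp: zero_power\<close>)
qed

lemma eventually_shifted_monomial_near_const:
  fixes g :: "complex poly" and j :: nat and t :: "nat \<Rightarrow> real" and R \<delta> :: real
  assumes "\<delta> > 0"
    and lin: "(\<lambda>n. (R + t n) / n) \<longlonglongrightarrow> 0" and inv: "(\<lambda>n. R / t n) \<longlonglongrightarrow> 0"
    and scale: "(\<lambda>n. exp (t n) * (t n / n) ^ j) \<longlonglongrightarrow> real j ^ j"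
    and nonneg: "eventually (\<lambda>n. 0 \<le> t n) sequentially"
  shows "eventually (\<lambda>n. \<forall>w\<in>cball (0::complex) R.
    norm (exp (t n) * ((w - t n) / n) ^ j * poly g ((w - t n) / n) - (-1) ^ j * of_nat j ^ j * poly g 0) < \<delta>)
    sequentially"
proof -
  define c where "c n = exp (t n) * (t n / n) ^ j" for n
  define h :: "complex \<times> complex \<times> complex \<Rightarrow> complex"
    where "h y = (fst y - 1) ^ j * fst (snd y) * poly g (snd (snd y))" for y
  define y0 :: "complex \<times> complex \<times> complex" where "y0 = (0, of_nat j ^ j, 0)"
  \<comment> \<open>e^{t_n} x^j g(x) is h at (w/t_n, c_n, x), a point that tends to y0 uniformly in w\<close>
  define \<epsilon> where "\<epsilon> n = R / t n + \<bar>c n - real j ^ j\<bar> + (R + t n) / n" for n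
  have "\<epsilon> \<longlonglongrightarrow> 0 + 0 + 0"
    unfolding \<epsilon>_def c_def using scale
    by (intro tendsto_add inv lin) (simp add: LIM_zero tendsto_rabs_zero)
  moreover have "isCont h y0"
    unfolding h_def by (intro continuous_intros)
  ultimately have "eventually (\<lambda>n. \<forall>y. dist y y0 \<le> \<epsilon> n \<longrightarrow> dist (h y) (h y0) < \<delta>) sequentially"
    using \<open>\<delta> > 0\<close> by (intro isCont_eventually_dist_less) auto
  moreover have "eventually (\<lambda>n. j > 0 \<longrightarrow> t n \<noteq> 0) sequentially"
    using eventually_nonzero_of_tendsto_exp_scale[OF scale] by (cases "j > 0") simp_all
  ultimately show ?thesis
    using nonneg eventually_gt_at_top[of 0]
  proof eventually_elim
    case (elim n)
    show ?case
    proof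
      fix w :: complex
      assume w: "w \<in> cball 0 R"
      define x where "x = (w - t n) / n"
      have "norm (w - t n) \<le> R + t n"
        using w elim norm_triangle_ineq4[of w "t n"] by auto
      then have "dist x 0 \<le> (R + t n) / n"
        using elim by (simp add: x_def norm_divide divide_right_mono)
      moreover have "dist (w / t n) 0 \<le> R / t n"
        using w elim by (simp add: norm_divide divide_right_mono)
      moreover have "dist (of_real (c n)) (of_nat j ^ j :: complex) = \<bar>c n - real j ^ j\<bar>"
        by (metis dist_of_real of_real_power of_real_of_nat_eq dist_real_def)
      ultimately have "dist (w / t n, of_real (c n), x) y0 \<le> \<epsilon> n"
        using dist_Pair_Pair_le[of "w / t n" "(of_real (c n) :: complex, x)" 0 "(of_nat j ^ j, 0)"]
          dist_Pair_Pair_le[of "of_real (c n) :: complex" x "of_nat j ^ j" 0]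
        unfolding y0_def \<epsilon>_def by linarith
      moreover have "h (w / t n, of_real (c n), x) = exp (t n) * x ^ j * poly g x"
        using exp_mult_shifted_power[of n j "t n" w] elim by (simp add: h_def x_def c_def mult_ac)
      ultimately have "dist (exp (t n) * x ^ j * poly g x) (h y0) < \<delta>"
        using elim by metis
      then show "norm (exp (t n) * ((w - t n) / n) ^ j * poly g ((w - t n) / n)
          - (-1) ^ j * of_nat j ^ j * poly g 0) < \<delta>"
        by (simp add: h_def y0_def x_def dist_norm)
    qed
  qed
qed

lemma eventually_shifted_poly_near_exp_sub_const:
  fixes g :: "complex poly" and j :: nat and t :: "nat \<Rightarrow> real" and R \<delta> :: real
  assumes "\<delta> > 0"
    and sq: "(\<lambda>n. (R + t n) ^ 2 / n) \<longlonglongrightarrow> 0" and lin: "(\<lambda>n. (R + t n) / n) \<longlonglongrightarrow> 0"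
    and inv: "(\<lambda>n. R / t n) \<longlonglongrightarrow> 0"
    and scale: "(\<lambda>n. exp (t n) * (t n / n) ^ j) \<longlonglongrightarrow> real j ^ j"
    and nonneg: "eventually (\<lambda>n. 0 \<le> t n) sequentially"
  shows "eventually (\<lambda>n. \<forall>w\<in>cball (0::complex) R.
    norm (exp (t n) * poly ([:1, 1:] ^ n - [:0, 1:] ^ j * g) ((w - t n) / n)
      - (exp w - (-1) ^ j * of_nat j ^ j * poly g 0)) < \<delta>) sequentially"
proof -
  have "\<delta> / 2 > 0"
    using \<open>\<delta> > 0\<close> by simp
  from eventually_shifted_pow_near_exp[OF this sq nonneg]
    eventually_shifted_monomial_near_const[OF this lin inv scale nonneg, of g]
  show ?thesis
  proof eventually_elim
    case (elim n)
    show ?case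
    proof
      fix w :: complex
      assume "w \<in> cball 0 R"
      define x where "x = (w - t n) / n"
      define A where "A = exp (t n) * (1 + x) ^ n - exp w"
      define B where "B = exp (t n) * x ^ j * poly g x - (-1) ^ j * of_nat j ^ j * poly g 0"
      have "norm A < \<delta> / 2" and "norm B < \<delta> / 2"
        using elim \<open>w \<in> cball 0 R\<close> by (auto simp: x_def A_def B_def)
      moreover have "exp (t n) * poly ([:1, 1:] ^ n - [:0, 1:] ^ j * g) x
          - (exp w - (-1) ^ j * of_nat j ^ j * poly g 0) = A - B"
        by (simp add: A_def B_def algebra_simps)
      then have "norm (exp (t n) * poly ([:1, 1:] ^ n - [:0, 1:] ^ j * g) x
          - (exp w - (-1) ^ j * of_nat j ^ j * poly g 0)) \<le> norm A + norm B"
        by (simp only: norm_triangle_ineq4)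
      ultimately show "norm (exp (t n) * poly ([:1, 1:] ^ n - [:0, 1:] ^ j * g) ((w - t n) / n)
          - (exp w - (-1) ^ j * of_nat j ^ j * poly g 0)) < \<delta>"
        unfolding x_def[symmetric] by linarith
    qed
  qed
qed

text \<open>The shift is chosen so that e^{t_n} (t_n/n)^j \<rightarrow> j^j while t_n^2/n \<rightarrow> 0.\<close>

definition log_shift :: "nat \<Rightarrow> nat \<Rightarrow> real"
  where "log_shift j n = real j * (ln (real n) - ln (ln (real n)))"

lemma log_shift_growth:
  fixes c :: real and j :: nat
  shows "(\<lambda>n. (c + log_shift j n) ^ 2 / n) \<longlonglongrightarrow> 0"
    and "(\<lambda>n. (c + log_shift j n) / n) \<longlonglongrightarrow> 0"
    and "(\<lambda>n. c / log_shift j n) \<longlonglongrightarrow> 0"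
    and "eventually (\<lambda>n. 0 \<le> log_shift j n) sequentially"
proof -
  define a where "a n = ln (real n) - ln (ln (real n))" for n :: nat
  have t: "log_shift j n = j * a n" for n
    by (simp add: log_shift_def a_def)
  have "(\<lambda>n. 1 / sqrt n) \<longlonglongrightarrow> 0" and "(\<lambda>n. a n / sqrt n) \<longlonglongrightarrow> 0"
    unfolding a_def by real_asymp+
  then have "(\<lambda>n. c * (1 / sqrt n) + j * (a n / sqrt n)) \<longlonglongrightarrow> c * 0 + real j * 0"
    by (intro tendsto_add tendsto_mult tendsto_const)
  then have sqrt: "(\<lambda>n. (c + log_shift j n) / sqrt n) \<longlonglongrightarrow> 0"
    by (simp add: t add_divide_distrib)
  from tendsto_power[OF sqrt, of 2] show "(\<lambda>n. (c + log_shift j n) ^ 2 / n) \<longlonglongrightarrow> 0"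
    by (simp add: power_divide)
  have "(\<lambda>n. (c + log_shift j n) / sqrt n * (1 / sqrt n)) \<longlonglongrightarrow> 0 * 0"
    by (intro tendsto_intros sqrt) real_asymp
  then show "(\<lambda>n. (c + log_shift j n) / n) \<longlonglongrightarrow> 0"
    by simp
  show "(\<lambda>n. c / log_shift j n) \<longlonglongrightarrow> 0"
  proof (cases "j = 0")
    case True
    then show ?thesis
      by (simp add: log_shift_def) \<comment> \<open>by the junk value c / 0 = 0\<close>
  next
    case False
    have "filterlim a at_top sequentially"
      unfolding a_def by real_asymp
    with False have "filterlim (log_shift j) at_top sequentially"
      unfolding t by (intro filterlim_tendsto_pos_mult_at_top[OF tendsto_const]) auto
    then show ?thesis
      by (intro tendsto_divide_0[OF tendsto_const] filterlim_at_top_imp_at_infinity)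
  qed
  have "eventually (\<lambda>n. 0 \<le> a n) sequentially"
    unfolding a_def by real_asymp
  then show "eventually (\<lambda>n. 0 \<le> log_shift j n) sequentially"
    by eventually_elim (simp add: t)
qed

lemma tendsto_exp_log_shift_scale:
  "(\<lambda>n. exp (log_shift j n) * (log_shift j n / n) ^ j) \<longlonglongrightarrow> real j ^ j"
proof -
  define a where "a n = ln (real n) - ln (ln (real n))" for n :: nat
  have t: "log_shift j n = j * a n" for n
    by (simp add: log_shift_def a_def)
  have "(\<lambda>n. exp (a n) * a n / n) \<longlonglongrightarrow> 1"
    unfolding a_def by real_asymp
  then have "(\<lambda>n. (j * (exp (a n) * a n / n)) ^ j) \<longlonglongrightarrow> (real j * 1) ^ j"
    by (intro tendsto_intros)
  moreover have "exp (log_shift j n) * (log_shift j n / n) ^ j = (j * (exp (a n) * a n / n)) ^ j" for n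
  proof -
    have "exp (log_shift j n) = exp (a n) ^ j"
      by (simp add: t exp_of_nat_mult)
    moreover have "exp (a n) * (log_shift j n / n) = j * (exp (a n) * a n / n)"
      by (simp add: t)
    ultimately show ?thesis
      by (metis power_mult_distrib)
  qed
  ultimately show ?thesis
    by simp
qed

lemma eventually_proots_near_shifted_log:
  fixes p :: "complex poly" and K :: nat
  assumes "p \<noteq> 0"
  obtains L :: complex where "eventually (\<lambda>n. size (filter_mset
    (\<lambda>z. z \<in> ball ((L - log_shift (order 0 p) n) / n) ((2 * K + 1) * pi / n))
    (proots ([:1, 1:] ^ n - p))) = 2 * K + 1) sequentially"
proof -
  define j where "j = order 0 p"
  obtain g where p: "p = [:0, 1:] ^ j * g" and "\<not> [:0, 1:] dvd g"
    using order_decomp[OF \<open>p \<noteq> 0\<close>, of 0] by (auto simp: j_def)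
  then have "poly g 0 \<noteq> 0"
    by (simp add: poly_eq_0_iff_dvd)
  define L where "L = Ln ((-1) ^ j * of_nat j ^ j * poly g 0)"
  have "(of_nat j :: complex) ^ j \<noteq> 0"
    by (cases "j = 0") auto
  then have L: "exp L = (-1) ^ j * of_nat j ^ j * poly g 0"
    using \<open>poly g 0 \<noteq> 0\<close> by (simp add: L_def)
  obtain \<delta> where "\<delta> > 0" and \<delta>: "\<And>w. w \<in> sphere L ((2 * K + 1) * pi) \<Longrightarrow> \<delta> \<le> norm (exp w - exp L)"
    using exp_sub_exp_bounded_below_on_sphere[of L K] by blast
  define R where "R = norm L + (2 * K + 1) * pi"
  have sphere: "sphere L ((2 * K + 1) * pi) \<subseteq> cball 0 R"
  proof
    fix w
    assume "w \<in> sphere L ((2 * K + 1) * pi)"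
    then have "norm (w - L) = (2 * K + 1) * pi"
      by (simp add: dist_norm norm_minus_commute)
    then show "w \<in> cball 0 R"
      using norm_triangle_sub[of w L] by (simp add: R_def)
  qed
  note growth = log_shift_growth(1-3)[of R j] log_shift_growth(4)[of j]
  have "eventually (\<lambda>n. \<forall>w\<in>cball (0::complex) R. norm (exp (log_shift j n)
      * poly ([:1, 1:] ^ n - p) ((w - log_shift j n) / n) - (exp w - exp L)) < \<delta>) sequentially"
    unfolding p L using eventually_shifted_poly_near_exp_sub_const[OF \<open>\<delta> > 0\<close>
      growth(1,2,3) tendsto_exp_log_shift_scale growth(4)] .
  with eventually_gt_at_top[of "degree p"] have "eventually (\<lambda>n. size (filter_mset
      (\<lambda>z. z \<in> ball ((L - log_shift j n) / n) ((2 * K + 1) * pi / n)) (proots ([:1, 1:] ^ n - p)))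
      = 2 * K + 1) sequentially"
  proof eventually_elim
    case (elim n)
    have "[:1, 1:] ^ n - p \<noteq> 0"
      using elim by (auto simp: degree_linear_power)
    with elim show ?case
      by (intro size_proots_near_exp_zeros) (use sphere \<delta> in fastforce)+
  qed
  then show thesis
    by (rule that[folded j_def])
qed

section \<open>Estimates for q_n near the origin\<close>

lemma norm_poly_le_sum_norm_coeff:
  fixes p :: "complex poly"
  assumes "norm z \<le> 1"
  shows "norm (poly p z) \<le> (\<Sum>i\<le>degree p. norm (coeff p i))"
proof -
  have "norm (poly p z) \<le> (\<Sum>i\<le>degree p. norm (coeff p i * z ^ i))"
    unfolding poly_altdef by (rule norm_sum)
  also have "\<dots> \<le> (\<Sum>i\<le>degree p. norm (coeff p i))"
    using assms by (intro sum_mono) (simp add: norm_mult norm_power mult_left_le power_le_one)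
  finally show ?thesis .
qed

lemma norm_one_plus_le_exp:
  fixes z :: complex
  assumes "norm z \<le> 1 / 2"
  shows "norm (1 + z) \<le> exp (Re z + norm z ^ 2)"
proof -
  have Re: "1 / 2 \<le> 1 + Re z"
    using abs_Re_le_cmod[of z] assms by linarith
  have Im: "Im z ^ 2 \<le> norm z ^ 2"
    using abs_Im_le_cmod[of z] by (metis abs_ge_zero power2_abs power_mono)
  have "norm (1 + z) \<le> 1 + Re z + Im z ^ 2"
  proof (rule power2_le_imp_le)
    have "norm (1 + z) ^ 2 = (1 + Re z) ^ 2 + Im z ^ 2"
      by (simp add: cmod_power2)
    also have "\<dots> \<le> (1 + Re z + Im z ^ 2) ^ 2"
    proof -
      have "(1 + Re z + Im z ^ 2) ^ 2 = (1 + Re z) ^ 2 + 2 * (1 + Re z) * Im z ^ 2 + Im z ^ 4"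
        by (simp add: power2_eq_square power4_eq_xxxx algebra_simps)
      moreover have "Im z ^ 2 \<le> 2 * (1 + Re z) * Im z ^ 2"
        using Re mult_right_mono[of 1 "2 * (1 + Re z)" "Im z ^ 2"] by simp
      moreover have "0 \<le> Im z ^ 4"
        by simp
      ultimately show ?thesis
        by linarith
    qed
    finally show "norm (1 + z) ^ 2 \<le> (1 + Re z + Im z ^ 2) ^ 2" .
    show "0 \<le> 1 + Re z + Im z ^ 2"
      using Re zero_le_power2[of "Im z"] by linarith
  qed
  also have "\<dots> \<le> 1 + (Re z + norm z ^ 2)"
    using Im by simp
  also have "\<dots> \<le> exp (Re z + norm z ^ 2)"
    by (rule exp_ge_add_one_self)
  finally show ?thesis .
qed

lemma norm_poly_qpoly_le:
  assumes "0 \<le> k" and "norm z \<le> 1 / 2"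
  shows "norm (poly (qpoly k p n) z)
    \<le> k * norm z * (exp (n * (Re z + norm z ^ 2)) + (\<Sum>i\<le>degree p. norm (coeff p i)))"
proof -
  have "norm ((1 + z) ^ n) \<le> exp (Re z + norm z ^ 2) ^ n"
    unfolding norm_power using norm_one_plus_le_exp[OF assms(2)] by (intro power_mono) auto
  also have "\<dots> = exp (n * (Re z + norm z ^ 2))"
    by (simp add: exp_of_nat_mult)
  finally have "norm ((1 + z) ^ n - poly p z)
      \<le> exp (n * (Re z + norm z ^ 2)) + (\<Sum>i\<le>degree p. norm (coeff p i))"
    using norm_poly_le_sum_norm_coeff[of z p] assms(2) norm_triangle_ineq4[of "(1 + z) ^ n" "poly p z"]
    by linarith
  moreover have "poly (qpoly k p n) z = k * (z * ((1 + z) ^ n - poly p z))"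
    by (simp add: qpoly_def add.commute)
  ultimately show ?thesis
    using assms(1) by (simp add: norm_mult mult.assoc mult_left_mono)
qed

lemma shifted_centre_ball_bounds:
  fixes L z :: complex and t S :: real and n :: nat
  assumes "0 \<le> t" and "n > 0" and z: "z \<in> ball ((L - t) / n) (norm ((L - t) / n) + 2 * S / n)"
  shows "norm z \<le> 2 * ((norm L + S + t) / n)" and "n * Re z \<le> 2 * (norm L + S)"
proof -
  define c where "c = (L - t) / n"
  have "norm (L - t) \<le> norm L + t"
    using norm_triangle_ineq4[of L "t"] \<open>0 \<le> t\<close> by simp
  then have nc: "norm c \<le> (norm L + t) / n"
    using \<open>n > 0\<close> by (simp add: c_def norm_divide divide_right_mono)
  have dz: "norm (z - c) < norm c + 2 * S / n"
    using z by (simp add: c_def dist_norm norm_minus_commute)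
  have "norm z \<le> norm c + norm (z - c)"
    by (metis add.commute diff_add_cancel norm_triangle_ineq)
  also have "\<dots> \<le> 2 * ((norm L + t) / n) + 2 * S / n"
    using dz nc by linarith
  also have "\<dots> = 2 * ((norm L + S + t) / n)"
    by (simp add: add_divide_distrib)
  finally show "norm z \<le> 2 * ((norm L + S + t) / n)" .
  have "Re c + norm c \<le> (Re L - t) / n + (norm L + t) / n"
    using nc by (simp add: c_def)
  also have "\<dots> \<le> 2 * norm L / n"
    using complex_Re_le_cmod[of L] \<open>n > 0\<close> by (simp add: add_divide_distrib[symmetric] divide_right_mono)
  finally have "Re z \<le> 2 * norm L / n + 2 * S / n"
    using complex_Re_le_cmod[of "z - c"] dz by simp
  then show "n * Re z \<le> 2 * (norm L + S)"
    using \<open>n > 0\<close> by (simp add: add_divide_distrib[symmetric] pos_le_divide_eq mult.commute)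
qed

lemma eventually_qpoly_image_subset_ball:
  fixes W :: "nat \<Rightarrow> complex set" and \<mu> :: "nat \<Rightarrow> real"
  assumes "0 \<le> k" and "\<mu> \<longlonglongrightarrow> 0" and "(\<lambda>n. n * \<mu> n ^ 2) \<longlonglongrightarrow> 0"
    and norm_le: "eventually (\<lambda>n. \<forall>z\<in>W n. norm z \<le> \<mu> n) sequentially"
    and Re_le: "eventually (\<lambda>n. \<forall>z\<in>W n. n * Re z \<le> C) sequentially"
  shows "eventually (\<lambda>n. poly (qpoly k p n) ` W n \<subseteq> ball 0 1) sequentially"
proof -
  define M where "M = (\<Sum>i\<le>degree p. norm (coeff p i))"
  have "(\<lambda>n. k * \<mu> n * (exp (C + n * \<mu> n ^ 2) + M)) \<longlonglongrightarrow> k * 0 * (exp (C + 0) + M)"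
    by (intro tendsto_intros assms)
  then have "eventually (\<lambda>n. k * \<mu> n * (exp (C + n * \<mu> n ^ 2) + M) < 1) sequentially"
    by (rule order_tendstoD) simp
  moreover have "eventually (\<lambda>n. \<mu> n < 1 / 2) sequentially"
    using \<open>\<mu> \<longlonglongrightarrow> 0\<close> by (rule order_tendstoD) simp
  ultimately show ?thesis
    using norm_le Re_le
  proof eventually_elim
    case (elim n)
    show ?case
    proof clarify
      fix z
      assume "z \<in> W n"
      with elim have z: "norm z \<le> \<mu> n" "n * Re z \<le> C"
        by auto
      then have "0 \<le> \<mu> n"
        using norm_ge_zero order_trans by blast
      have "n * (Re z + norm z ^ 2) \<le> C + n * \<mu> n ^ 2"
        using z by (simp add: distrib_left power_mono mult_left_mono add_mono)
      then have "exp (n * (Re z + norm z ^ 2)) + M \<le> exp (C + n * \<mu> n ^ 2) + M"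
        by simp
      moreover have "0 \<le> exp (n * (Re z + norm z ^ 2)) + M"
        by (simp add: M_def sum_nonneg)
      ultimately have "k * norm z * (exp (n * (Re z + norm z ^ 2)) + M)
          \<le> k * \<mu> n * (exp (C + n * \<mu> n ^ 2) + M)"
        using z \<open>0 \<le> k\<close> \<open>0 \<le> \<mu> n\<close> by (intro mult_mono mult_left_mono) auto
      with norm_poly_qpoly_le[OF \<open>0 \<le> k\<close>, of z p n] z elim show "poly (qpoly k p n) z \<in> ball 0 1"
        by (simp add: M_def)
    qed
  qed
qed

section \<open>The divisors r_n and the regions W_n\<close>

lemma eventually_prod_linear_divisors:
  fixes Q :: "nat \<Rightarrow> complex poly" and W :: "nat \<Rightarrow> complex set" and \<mu> :: "nat \<Rightarrow> real"
  assumes "\<mu> \<longlonglongrightarrow> 0"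
    and roots: "eventually (\<lambda>n. m \<le> size (filter_mset (\<lambda>z. z \<in> W n) (proots (Q n)))) sequentially"
    and bound: "eventually (\<lambda>n. \<forall>z\<in>W n. norm z \<le> \<mu> n) sequentially"
  obtains r where "eventually (\<lambda>n. r n \<noteq> 0 \<and> degree (r n) = m \<and> r n dvd Q n
      \<and> {z. poly (r n) z = 0} \<subseteq> W n) sequentially"
    and "\<And>i. (\<lambda>n. coeff (r n) i) \<longlonglongrightarrow> coeff (monom 1 m) i"
proof -
  have "\<exists>N. m \<le> size (filter_mset (\<lambda>z. z \<in> W n) (proots (Q n))) \<longrightarrow>
      size N = m \<and> (\<forall>a\<in>#N. a \<in> W n) \<and> (\<Prod>a\<in>#N. [:-a, 1:]) dvd Q n" for n
    using ex_prod_mset_linear_dvd by metis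
  then obtain N where N: "\<And>n. m \<le> size (filter_mset (\<lambda>z. z \<in> W n) (proots (Q n))) \<Longrightarrow>
      size (N n) = m \<and> (\<forall>a\<in>#N n. a \<in> W n) \<and> (\<Prod>a\<in>#N n. [:-a, 1:]) dvd Q n"
    by metis
  define r where "r n = (\<Prod>a\<in>#N n. [:-a, 1:])" for n
  show thesis
  proof (rule that)
    from roots show "eventually (\<lambda>n. r n \<noteq> 0 \<and> degree (r n) = m \<and> r n dvd Q n
        \<and> {z. poly (r n) z = 0} \<subseteq> W n) sequentially"
      by eventually_elim (use N in \<open>auto simp: r_def prod_mset_linear_nonzero
          degree_prod_mset_linear poly_prod_mset_linear_eq_0_iff\<close>)
    fix i
    have "eventually (\<lambda>n. \<mu> n < 1) sequentially"
      using \<open>\<mu> \<longlonglongrightarrow> 0\<close> by (rule order_tendstoD) simp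
    with roots bound have "eventually (\<lambda>n.
        norm (coeff (r n) i - coeff (monom 1 m) i) \<le> (2 ^ m - 1) * \<mu> n) sequentially"
    proof eventually_elim
      case (elim n)
      then show ?case
        using N[of n] norm_coeff_prod_mset_linear_sub_monom_le[of "N n" "\<mu> n" i]
        by (auto simp: r_def)
    qed
    moreover have "(\<lambda>n. (2 ^ m - 1) * \<mu> n) \<longlonglongrightarrow> 0"
      using tendsto_mult_right_zero[OF \<open>\<mu> \<longlonglongrightarrow> 0\<close>] .
    ultimately have "(\<lambda>n. coeff (r n) i - coeff (monom 1 m) i) \<longlonglongrightarrow> 0"
      by (rule Lim_null_comparison)
    then show "(\<lambda>n. coeff (r n) i) \<longlonglongrightarrow> coeff (monom 1 m) i"
      by (rule LIM_zero_cancel)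
  qed
qed

lemma tendsto_SUP_norm_zero:
  fixes W :: "nat \<Rightarrow> complex set" and \<mu> :: "nat \<Rightarrow> real"
  assumes "\<mu> \<longlonglongrightarrow> 0" and zero: "eventually (\<lambda>n. 0 \<in> W n) sequentially"
    and norm_le: "eventually (\<lambda>n. \<forall>z\<in>W n. norm z \<le> \<mu> n) sequentially"
  shows "(\<lambda>n. SUP z\<in>W n. ereal (norm z)) \<longlonglongrightarrow> 0"
proof (rule tendsto_sandwich[of "\<lambda>n. 0" _ _ "\<lambda>n. ereal (\<mu> n)"])
  show "eventually (\<lambda>n. 0 \<le> (SUP z\<in>W n. ereal (norm z))) sequentially"
    using zero by eventually_elim (auto intro: SUP_upper2)
  show "eventually (\<lambda>n. (SUP z\<in>W n. ereal (norm z)) \<le> ereal (\<mu> n)) sequentially"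
    using norm_le by eventually_elim (auto intro: SUP_least)
  show "(\<lambda>n. ereal (\<mu> n)) \<longlonglongrightarrow> 0"
    using tendsto_ereal[OF \<open>\<mu> \<longlonglongrightarrow> 0\<close>] by (simp add: zero_ereal_def)
qed simp


lemma ex_shrinking_regions_with_roots:
  fixes p :: "complex poly" and m :: nat
  assumes "p \<noteq> 0"
  obtains W :: "nat \<Rightarrow> complex set" and \<mu> :: "nat \<Rightarrow> real" and C :: real
  where "\<And>n. open (W n)" and "\<And>n. connected (W n)"
    and "\<mu> \<longlonglongrightarrow> 0" and "(\<lambda>n. n * \<mu> n ^ 2) \<longlonglongrightarrow> 0"
    and "eventually (\<lambda>n. 0 \<in> W n) sequentially"
    and "eventually (\<lambda>n. \<forall>z\<in>W n. norm z \<le> \<mu> n) sequentially"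
    and "eventually (\<lambda>n. \<forall>z\<in>W n. n * Re z \<le> C) sequentially"
    and "eventually (\<lambda>n. m \<le> size (filter_mset (\<lambda>z. z \<in> W n) (proots ([:1, 1:] ^ n - p))))
      sequentially"
proof -
  define t where "t = log_shift (order 0 p)"
  obtain L :: complex where roots: "eventually (\<lambda>n. size (filter_mset
      (\<lambda>z. z \<in> ball ((L - t n) / n) ((2 * m + 1) * pi / n)) (proots ([:1, 1:] ^ n - p))) = 2 * m + 1)
      sequentially"
    using eventually_proots_near_shifted_log[OF \<open>p \<noteq> 0\<close>, of m, folded t_def] by blast
  define R where "R = (2 * m + 1) * pi"
  define W where "W n = ball ((L - t n) / n) (norm ((L - t n) / n) + 2 * R / n)" for n
  define \<mu> where "\<mu> n = 2 * ((norm L + R + t n) / n)" for n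
  note growth = log_shift_growth(1-3)[of "norm L + R" "order 0 p", folded t_def]
    log_shift_growth(4)[of "order 0 p", folded t_def]
  show thesis
  proof (rule that[of W \<mu> "2 * (norm L + R)"])
    show "open (W n)" and "connected (W n)" for n
      by (simp_all add: W_def)
    show "\<mu> \<longlonglongrightarrow> 0"
      unfolding \<mu>_def using tendsto_mult_right_zero[OF growth(2)] .
    have "(\<lambda>n. 4 * ((norm L + R + t n) ^ 2 / n)) \<longlonglongrightarrow> 0"
      using tendsto_mult_right_zero[OF growth(1)] .
    moreover have "eventually (\<lambda>n. 4 * ((norm L + R + t n) ^ 2 / n) = n * \<mu> n ^ 2) sequentially"
      using eventually_gt_at_top[of 0] by eventually_elim (simp add: \<mu>_def power2_eq_square field_simps)
    ultimately show "(\<lambda>n. n * \<mu> n ^ 2) \<longlonglongrightarrow> 0"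
      by (rule Lim_transform_eventually)
    show "eventually (\<lambda>n. 0 \<in> W n) sequentially"
      using eventually_gt_at_top[of 0] by eventually_elim (simp add: W_def R_def)
    from growth(4) eventually_gt_at_top[of 0]
    have bounds: "eventually (\<lambda>n. \<forall>z\<in>W n. norm z \<le> \<mu> n \<and> n * Re z \<le> 2 * (norm L + R)) sequentially"
    proof eventually_elim
      case (elim n)
      have "norm z \<le> \<mu> n \<and> n * Re z \<le> 2 * (norm L + R)" if "z \<in> W n" for z
        using shifted_centre_ball_bounds[of "t n" n z L R] elim that by (simp add: W_def \<mu>_def)
      then show ?case
        by blast
    qed
    show "eventually (\<lambda>n. \<forall>z\<in>W n. norm z \<le> \<mu> n) sequentially"
      using bounds by (rule eventually_mono) blast
    show "eventually (\<lambda>n. \<forall>z\<in>W n. n * Re z \<le> 2 * (norm L + R)) sequentially"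
      using bounds by (rule eventually_mono) blast
    from roots eventually_gt_at_top[of 0]
    show "eventually (\<lambda>n. m \<le> size (filter_mset (\<lambda>z. z \<in> W n) (proots ([:1, 1:] ^ n - p))))
        sequentially"
    proof eventually_elim
      case (elim n)
      have "R / n \<le> 2 * R / n"
        by (simp add: R_def divide_right_mono)
      then have "ball ((L - t n) / n) (R / n) \<subseteq> W n"
        unfolding W_def using norm_ge_zero[of "(L - t n) / n"] by (intro subset_ball) linarith
      then have "size (filter_mset (\<lambda>z. z \<in> ball ((L - t n) / n) (R / n)) (proots ([:1, 1:] ^ n - p)))
          \<le> size (filter_mset (\<lambda>z. z \<in> W n) (proots ([:1, 1:] ^ n - p)))"
        by (intro size_mset_mono filter_mset_mono_strong) auto
      with elim show ?case
        by (simp add: R_def)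
    qed
  qed
qed

theorem corollary3p7:
  fixes k :: real and p :: "complex poly" and m :: nat
  assumes "k > 0" and "p \<noteq> 0"
  shows "\<exists>(n0::nat) (W :: nat \<Rightarrow> complex set) (r :: nat \<Rightarrow> complex poly).
    (\<forall>n\<ge>n0. open (W n) \<and> connected (W n) \<and> W n \<noteq> {} \<and> 0 \<in> W n
        \<and> r n \<noteq> 0 \<and> degree (r n) = m
        \<and> r n dvd qpoly k p n
        \<and> poly (qpoly k p n) ` W n \<subseteq> ball 0 1
        \<and> {z. poly (r n) z = 0} \<subseteq> W n)
    \<and> (\<forall>i. (\<lambda>n. coeff (r n) i) \<longlonglongrightarrow> coeff (monom 1 m) i)
    \<and> ((\<lambda>n. SUP z\<in>W n. ereal (norm z)) \<longlonglongrightarrow> 0)"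
proof -
  obtain W :: "nat \<Rightarrow> complex set" and \<mu> :: "nat \<Rightarrow> real" and C :: real
    where W: "\<And>n. open (W n)" "\<And>n. connected (W n)"
      and \<mu>: "\<mu> \<longlonglongrightarrow> 0" "(\<lambda>n. n * \<mu> n ^ 2) \<longlonglongrightarrow> 0"
      and zero: "eventually (\<lambda>n. 0 \<in> W n) sequentially"
      and norm_le: "eventually (\<lambda>n. \<forall>z\<in>W n. norm z \<le> \<mu> n) sequentially"
      and Re_le: "eventually (\<lambda>n. \<forall>z\<in>W n. n * Re z \<le> C) sequentially"
      and roots: "eventually (\<lambda>n. m \<le> size (filter_mset (\<lambda>z. z \<in> W n) (proots ([:1, 1:] ^ n - p))))
        sequentially"
    using ex_shrinking_regions_with_roots[OF \<open>p \<noteq> 0\<close>, of m] by blast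
  have small: "eventually (\<lambda>n. poly (qpoly k p n) ` W n \<subseteq> ball 0 1) sequentially"
    using \<open>k > 0\<close> by (intro eventually_qpoly_image_subset_ball[OF _ \<mu> norm_le Re_le]) simp
  obtain r :: "nat \<Rightarrow> complex poly"
    where r: "eventually (\<lambda>n. r n \<noteq> 0 \<and> degree (r n) = m \<and> r n dvd [:1, 1:] ^ n - p
        \<and> {z. poly (r n) z = 0} \<subseteq> W n) sequentially"
      and coeff: "\<And>i. (\<lambda>n. coeff (r n) i) \<longlonglongrightarrow> coeff (monom 1 m) i"
    using eventually_prod_linear_divisors[OF \<mu>(1) roots norm_le] by blast
  have dvd: "r n dvd qpoly k p n" if "r n dvd [:1, 1:] ^ n - p" for n
    unfolding qpoly_def using that by (intro dvd_smult dvd_mult)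
  from zero small r have "eventually (\<lambda>n. open (W n) \<and> connected (W n) \<and> W n \<noteq> {} \<and> 0 \<in> W n
      \<and> r n \<noteq> 0 \<and> degree (r n) = m \<and> r n dvd qpoly k p n
      \<and> poly (qpoly k p n) ` W n \<subseteq> ball 0 1 \<and> {z. poly (r n) z = 0} \<subseteq> W n) sequentially"
    by eventually_elim (use W dvd in blast)
  then obtain n0 where "\<forall>n\<ge>n0. open (W n) \<and> connected (W n) \<and> W n \<noteq> {} \<and> 0 \<in> W n
      \<and> r n \<noteq> 0 \<and> degree (r n) = m \<and> r n dvd qpoly k p n
      \<and> poly (qpoly k p n) ` W n \<subseteq> ball 0 1 \<and> {z. poly (r n) z = 0} \<subseteq> W n"
    unfolding eventually_sequentially by blast
  with coeff tendsto_SUP_norm_zero[OF \<mu>(1) zero norm_le] show ?thesis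
    by blast
qed

end
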